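(* Let $\delta_1>0$ be an admissible one-dimensional sum-product exponent, i.e. a constant such that every finite, non-empty set $B\subseteq\mathbb{R}$ satisfies $|B+B|+|B\cdot B|\gtrsim |B|^{1+\delta_1}$, and for $u\in\mathbb{N}$ put $\delta_u=\delta_1/u$. Let $d\ge 2$, let $H$ be an axis aligned affine subspace of $\mathbb{R}^d$ of dimension $r$ with $1\le r\le d-1$, and let $A$ be a finite, non-empty subset of $H$. Then \[ |A+A|+|A\cdot A| \gtrsim_r |A|^{1+\delta_r}. \]
   Context: Addition and multiplication in $\mathbb{R}^d$ are coordinatewise, and $A+A=\{a+b:a,b\in A\}$, $A\cdot A=\{a\cdot b: a,b\in A\}$. An affine subspace $H\subseteq\mathbb{R}^d$ is axis aligned if $H=X_1\times\cdots\times X_d$ where for each $i$ either $X_i=\{a_i\}$ for some $a_i\in\mathbb{R}$ or $X_i=\mathbb{R}$. Notation: $X\gtrsim_z Y$ means $|X|\ge C|Y|(\log|A|)^{D}$ for some constants $C>0$ and $D$ depending only on the parameter $z$ (with $A$ the set under consideration); $\gtrsim$ is the same with absolute constants. By a result of Shakan, $\delta_1=1/3+5/5277$ is admissible. *)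

theory Defs
  imports Complex_Main
begin

definition sumset_real :: "real set \<Rightarrow> real set" where
  "sumset_real B = {x + y | x y. x \<in> B \<and> y \<in> B}"

definition prodset_real :: "real set \<Rightarrow> real set" where
  "prodset_real B = {x * y | x y. x \<in> B \<and> y \<in> B}"

(* Points of R^d are represented as functions nat => real vanishing at all
   indices >= d; coordinates are indexed by {0..<d}. *)
definition sumset_vec :: "(nat \<Rightarrow> real) set \<Rightarrow> (nat \<Rightarrow> real) set" where
  "sumset_vec A = {(\<lambda>i. x i + y i) | x y. x \<in> A \<and> y \<in> A}"

definition prodset_vec :: "(nat \<Rightarrow> real) set \<Rightarrow> (nat \<Rightarrow> real) set" where
  "prodset_vec A = {(\<lambda>i. x i * y i) | x y. x \<in> A \<and> y \<in> A}"

(* Axis aligned affine subspace of R^d: the coordinates in S are free,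
   coordinate i < d outside S is fixed to a i. Its dimension is card S. *)
definition axis_subspace :: "nat \<Rightarrow> nat set \<Rightarrow> (nat \<Rightarrow> real) \<Rightarrow> (nat \<Rightarrow> real) set" where
  "axis_subspace d S a =
     {x. (\<forall>i. d \<le> i \<longrightarrow> x i = 0) \<and> (\<forall>i<d. i \<notin> S \<longrightarrow> x i = a i)}"

(* delta is an admissible one-dimensional sum-product exponent:
   |B+B| + |B.B| >~ |B|^(1+delta), with >~ allowing a constant C > 0 and a
   power (log |B|)^D of the logarithm. *)
definition sp_admissible :: "real \<Rightarrow> bool" where
  "sp_admissible \<delta> \<longleftrightarrow>
     (\<exists>C>0. \<exists>D::real. \<forall>B::real set. finite B \<and> B \<noteq> {} \<longrightarrow>
        real (card (sumset_real B)) + real (card (prodset_real B))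
          \<ge> C * real (card B) powr (1 + \<delta>) * ln (real (card B)) powr D)"

end

theory Submission
  imports Defs "HOL-Analysis.Harmonic_Numbers" "HOL-Library.Set_Algebras" "HOL-Library.Function_Algebras"
begin

(* Induction on the dimension r of the flat. For r = 1 the set A is a copy of its free coordinate.
   For r >= 2, if a fraction 1/(2r) of A has a vanishing free coordinate x_k, the hyperplane
   x_k = 0 carries a set of dimension r - 1, whose better exponent delta/(r - 1) suffices.
   Otherwise pass to the points with all free coordinates nonzero and fix a free coordinate j.
   A harmonic pigeonhole gives t and k values b of x_j whose fibres have at least t points each,
   with t k >~ |A| / log |A|. Sums and products of two points of the fibre over b have j-th
   coordinate 2b and b^2, so the fibres contribute almost disjointly and the induction hypothesis
   gives |A+A| + |AA| >~ t k t^(delta/(r-1)). Translation and dilation by a fixed point are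
   injective on a fibre, so |A+A| + |AA| >= t (|B+B| + |BB|) >~ t k^(1+delta) for the projection B.
   Finally max (t^(delta/(r-1)), k^delta) >= (t k)^(delta/r). *)

definition opset :: "('a \<Rightarrow> 'a \<Rightarrow> 'b) \<Rightarrow> 'a set \<Rightarrow> 'b set" where
  "opset f A = case_prod f ` (A \<times> A)"

lemma set_plus_self_eq_opset: "A + A = opset (+) A"
  unfolding opset_def by (rule set_plus_image)

lemma set_times_self_eq_opset: "A * A = opset (*) A"
  unfolding opset_def by (rule set_times_image)

lemma finite_opset: "finite A \<Longrightarrow> finite (opset f A)"
  unfolding opset_def by simp

lemma opset_mono: "A \<subseteq> B \<Longrightarrow> opset f A \<subseteq> opset f B"
  unfolding opset_def by blast

lemma opsetI: "x \<in> A \<Longrightarrow> y \<in> A \<Longrightarrow> f x y \<in> opset f A"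
  unfolding opset_def by force

lemma opsetE:
  assumes "w \<in> opset f A"
  obtains x y where "x \<in> A" "y \<in> A" "w = f x y"
  using assms unfolding opset_def by force

lemma sum_card_opset_fibres_le:
  fixes \<pi> :: "'v \<Rightarrow> 'a"
  assumes "finite A" "finite T"
    and hom: "\<And>x y. \<pi> (F x y) = f (\<pi> x) (\<pi> y)"
    and inj: "inj_on (\<lambda>b. f b b) T"
  shows "(\<Sum>b\<in>T. card (opset F {x\<in>A. \<pi> x = b})) \<le> card (opset F A)"
proof -
  have label: "\<pi> w = f b b" if "w \<in> opset F {x\<in>A. \<pi> x = b}" for w b
    using that hom by (elim opsetE) auto
  have "opset F {x\<in>A. \<pi> x = b} \<inter> opset F {x\<in>A. \<pi> x = b'} = {}"
    if "b \<in> T" "b' \<in> T" "b \<noteq> b'" for b b'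
  proof (rule equals0I)
    fix w assume "w \<in> opset F {x\<in>A. \<pi> x = b} \<inter> opset F {x\<in>A. \<pi> x = b'}"
    then have "f b b = f b' b'"
      using label[of w b] label[of w b'] by simp
    with inj that show False
      unfolding inj_on_def by blast
  qed
  then have "(\<Sum>b\<in>T. card (opset F {x\<in>A. \<pi> x = b})) = card (\<Union>b\<in>T. opset F {x\<in>A. \<pi> x = b})"
    using assms(1,2) by (intro card_UN_disjoint[symmetric]) (auto simp: finite_opset)
  also have "\<dots> \<le> card (opset F A)"
    using assms(1) by (intro card_mono finite_opset UN_least opset_mono) auto
  finally show ?thesis .
qed

lemma mult_card_opset_image_le:
  fixes \<pi> :: "'v \<Rightarrow> 'a"
  assumes "finite A"
    and hom: "\<And>x y. \<pi> (F x y) = f (\<pi> x) (\<pi> y)"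
    and fibres: "\<And>b. b \<in> \<pi> ` A \<Longrightarrow> t \<le> card {x\<in>A. \<pi> x = b}"
    and inj: "\<And>x b. x \<in> A \<Longrightarrow> inj_on (F x) {z\<in>A. \<pi> z = b}"
  shows "t * card (opset f (\<pi> ` A)) \<le> card (opset F A)"
proof -
  let ?fibre = "\<lambda>s. {w \<in> opset F A. \<pi> w = s}"
  have "t \<le> card (?fibre s)" if "s \<in> opset f (\<pi> ` A)" for s
  proof -
    from that obtain x y where xy: "x \<in> A" "y \<in> A" "s = f (\<pi> x) (\<pi> y)"
      by (elim opsetE) auto
    have "t \<le> card {z\<in>A. \<pi> z = \<pi> y}"
      using fibres xy(2) by blast
    also have "\<dots> = card (F x ` {z\<in>A. \<pi> z = \<pi> y})"
      using inj[OF xy(1)] by (simp add: card_image)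
    also have "\<dots> \<le> card (?fibre s)"
      using assms(1) xy hom by (intro card_mono) (auto simp: finite_opset intro: opsetI)
    finally show ?thesis .
  qed
  then have "t * card (opset f (\<pi> ` A)) \<le> (\<Sum>s\<in>opset f (\<pi> ` A). card (?fibre s))"
    using sum_bounded_below[of "opset f (\<pi> ` A)" t] by (simp add: mult.commute)
  also have "\<dots> \<le> (\<Sum>s\<in>\<pi> ` opset F A. card (?fibre s))"
  proof (intro sum_mono2 subsetI)
    fix s assume "s \<in> opset f (\<pi> ` A)"
    then obtain x y where "x \<in> A" "y \<in> A" "s = \<pi> (F x y)"
      using hom by (elim opsetE) auto
    then show "s \<in> \<pi> ` opset F A" by (auto intro: opsetI)
  qed (use assms(1) finite_opset in auto)
  also have "\<dots> = card (opset F A)"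
    using sum.image_gen[where S = "opset F A" and h = "\<lambda>_. 1::nat" and g = \<pi>] assms(1)
    by (simp add: finite_opset)
  finally show ?thesis .
qed

definition sp_size :: "'a::{plus,times} set \<Rightarrow> real" where
  "sp_size A = real (card (A + A)) + real (card (A * A))"

lemma sp_size_nonneg: "0 \<le> sp_size A"
  unfolding sp_size_def by simp

lemma sp_size_mono: "A \<subseteq> B \<Longrightarrow> finite B \<Longrightarrow> sp_size A \<le> sp_size B"
  unfolding sp_size_def set_plus_self_eq_opset set_times_self_eq_opset
  by (intro add_mono of_nat_mono card_mono finite_opset opset_mono)

lemma sp_size_singleton: "sp_size {b} = 2"
  unfolding sp_size_def set_plus_self_eq_opset set_times_self_eq_opset opset_def by simp

(* The j-th coordinate of a sum (product) of two points of the fibre over b is b + b (b * b);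
   squaring is injective on b \<ge> 0 and on b \<le> 0 separately, whence the factor 2. *)
lemma sum_sp_size_fibres_le:
  fixes A :: "('i \<Rightarrow> real) set"
  assumes "finite A" "finite T"
  shows "(\<Sum>b\<in>T. sp_size {x\<in>A. x j = b}) \<le> 2 * sp_size A"
proof -
  let ?card_opset = "\<lambda>F b. card (opset F {x\<in>A. x j = b})"
  have products: "(\<Sum>b\<in>T'. ?card_opset (*) b) \<le> card (opset (*) A)"
    if "T' \<subseteq> T" "inj_on (\<lambda>b. b * b) T'" for T'
    using assms that finite_subset
    by (intro sum_card_opset_fibres_le[where \<pi> = "\<lambda>x. x j" and f = "(*)"]) auto
  define Tpos where "Tpos = {b\<in>T. 0 \<le> b}"
  define Tneg where "Tneg = {b\<in>T. b \<le> 0}"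
  have "(\<Sum>b\<in>T. ?card_opset (*) b) \<le> (\<Sum>b\<in>Tpos. ?card_opset (*) b) + (\<Sum>b\<in>Tneg. ?card_opset (*) b)"
  proof -
    have "T = Tpos \<union> Tneg"
      unfolding Tpos_def Tneg_def by auto
    then show ?thesis
      using sum.union_inter[of Tpos Tneg "?card_opset (*)"] assms(2)
      unfolding Tpos_def Tneg_def by simp
  qed
  also have "\<dots> \<le> 2 * card (opset (*) A)"
    using products[of Tpos] products[of Tneg]
    unfolding Tpos_def Tneg_def inj_on_def by (auto simp: square_eq_iff)
  finally have "(\<Sum>b\<in>T. ?card_opset (*) b) \<le> 2 * card (opset (*) A)" .
  moreover have "(\<Sum>b\<in>T. ?card_opset (+) b) \<le> card (opset (+) A)"
    using assms by (intro sum_card_opset_fibres_le[where \<pi> = "\<lambda>x. x j" and f = "(+)"]) (auto simp: inj_on_def)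
  ultimately show ?thesis
    unfolding sp_size_def set_plus_self_eq_opset set_times_self_eq_opset sum.distrib
    by (simp flip: of_nat_sum)
qed

lemma mult_sp_size_projection_le:
  fixes A :: "('i \<Rightarrow> real) set"
  assumes "finite A"
    and fibres: "\<And>b. b \<in> (\<lambda>x. x j) ` A \<Longrightarrow> t \<le> card {x\<in>A. x j = b}"
    and inj: "\<And>x b. x \<in> A \<Longrightarrow> inj_on ((*) x) {z\<in>A. z j = b}"
  shows "real t * sp_size ((\<lambda>x. x j) ` A) \<le> sp_size A"
proof -
  have "t * card (opset (+) ((\<lambda>x. x j) ` A)) \<le> card (opset (+) A)"
    using assms(1) fibres
    by (intro mult_card_opset_image_le[where \<pi> = "\<lambda>x. x j" and f = "(+)"]) (auto simp: inj_on_def)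
  moreover have "t * card (opset (*) ((\<lambda>x. x j) ` A)) \<le> card (opset (*) A)"
    using assms by (intro mult_card_opset_image_le[where \<pi> = "\<lambda>x. x j" and f = "(*)"]) auto
  ultimately show ?thesis
    unfolding sp_size_def set_plus_self_eq_opset set_times_self_eq_opset distrib_left
    by (simp flip: of_nat_mult)
qed

definition axis_flat :: "'i set \<Rightarrow> ('i \<Rightarrow> 'a) set \<Rightarrow> bool" where
  "axis_flat S A \<longleftrightarrow> (\<forall>x\<in>A. \<forall>y\<in>A. \<forall>i. i \<notin> S \<longrightarrow> x i = y i)"

lemma axis_flat_subset: "axis_flat S A \<Longrightarrow> B \<subseteq> A \<Longrightarrow> axis_flat S B"
  unfolding axis_flat_def by blast

lemma axis_flat_slice: "axis_flat S A \<Longrightarrow> axis_flat (S - {k}) {x\<in>A. x k = c}"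
  unfolding axis_flat_def by auto

lemma axis_flat_axis_subspace:
  assumes "A \<subseteq> axis_subspace d S a"
  shows "axis_flat S A"
  unfolding axis_flat_def
proof (intro ballI allI impI)
  fix x y i assume "x \<in> A" "y \<in> A" "i \<notin> S"
  then have "x \<in> axis_subspace d S a" "y \<in> axis_subspace d S a"
    using assms by auto
  with \<open>i \<notin> S\<close> show "x i = y i"
    unfolding axis_subspace_def by (cases "d \<le> i") auto
qed

lemma axis_flat_singleton_inj_on:
  assumes "axis_flat {j} A"
  shows "inj_on (\<lambda>x. x j) A"
proof (rule inj_onI, rule ext)
  fix x y i assume "x \<in> A" "y \<in> A" "x j = y j"
  with assms show "x i = y i"
    unfolding axis_flat_def by (cases "i = j") auto
qed

lemma inj_on_times_axis_flat:
  fixes x :: "'i \<Rightarrow> 'a::idom"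
  assumes "axis_flat S A" "\<forall>i\<in>S. x i \<noteq> 0"
  shows "inj_on ((*) x) A"
proof (rule inj_onI, rule ext)
  fix z z' i assume z: "z \<in> A" "z' \<in> A" and eq: "x * z = x * z'"
  show "z i = z' i"
  proof (cases "i \<in> S")
    case True
    then show ?thesis
      using assms(2) fun_cong[OF eq, of i] by simp
  next
    case False
    then show ?thesis
      using assms(1) z unfolding axis_flat_def by blast
  qed
qed

lemma card_ge_1: "finite A \<Longrightarrow> A \<noteq> {} \<Longrightarrow> 1 \<le> card A"
  by (simp add: Suc_le_eq card_gt_0_iff)

lemma card_fibre_ge_1:
  assumes "finite A" "b \<in> f ` A"
  shows "1 \<le> card {x\<in>A. f x = b}"
proof (rule card_ge_1)
  show "finite {x\<in>A. f x = b}"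
    using assms(1) by simp
  show "{x\<in>A. f x = b} \<noteq> {}"
    using assms(2) by auto
qed

lemma card_eq_sum_card_fibres: "finite A \<Longrightarrow> card A = (\<Sum>b\<in>f ` A. card {x\<in>A. f x = b})"
  using sum.image_gen[where h = "\<lambda>_. 1::nat" and g = f and S = A] by simp

lemma mult_card_image_le_card:
  assumes "finite A" "\<And>b. b \<in> f ` A \<Longrightarrow> t \<le> card {x\<in>A. f x = b}"
  shows "t * card (f ` A) \<le> card A"
proof -
  have "t * card (f ` A) \<le> (\<Sum>b\<in>f ` A. card {x\<in>A. f x = b})"
    using sum_bounded_below[of "f ` A" t] assms(2) by (simp add: mult.commute)
  then show ?thesis
    using card_eq_sum_card_fibres[OF assms(1), of f] by simp
qed

lemma exists_large_part_of_cover: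
  fixes P :: "'k \<Rightarrow> 'a \<Rightarrow> bool"
  assumes "finite S" "S \<noteq> {}" "finite A" and cover: "\<And>x. x \<in> A \<Longrightarrow> \<exists>k\<in>S. P k x"
  shows "\<exists>k\<in>S. card A \<le> card S * card {x\<in>A. P k x}"
proof -
  define M where "M = Max ((\<lambda>k. card {x\<in>A. P k x}) ` S)"
  have "M \<in> (\<lambda>k. card {x\<in>A. P k x}) ` S"
    unfolding M_def using assms(1,2) by (intro Max_in) auto
  then obtain k where k: "k \<in> S" "card {x\<in>A. P k x} = M"
    by auto
  have "card A \<le> card (\<Union>k\<in>S. {x\<in>A. P k x})"
    using assms(1,3) cover by (intro card_mono) auto
  also have "\<dots> \<le> (\<Sum>k\<in>S. card {x\<in>A. P k x})"
    using assms(1) by (rule card_UN_le)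
  also have "\<dots> \<le> card S * M"
  proof -
    have "card {x\<in>A. P k' x} \<le> M" if "k' \<in> S" for k'
      unfolding M_def using assms(1) that by (intro Max_ge) auto
    then show ?thesis
      using sum_bounded_above[of S "\<lambda>k. card {x\<in>A. P k x}" M] by simp
  qed
  finally show ?thesis
    using k by blast
qed

lemma large_nonzero_part_or_large_zero_slice:
  fixes A :: "('i \<Rightarrow> 'a::zero) set"
  assumes "finite A" "finite S" "S \<noteq> {}"
  obtains "real (card A) \<le> 2 * real (card {x\<in>A. \<forall>i\<in>S. x i \<noteq> 0})"
    | k where "k \<in> S" "real (card A) \<le> 2 * real (card S) * real (card {x\<in>A. x k = 0})"
proof (cases "real (card A) \<le> 2 * real (card {x\<in>A. \<forall>i\<in>S. x i \<noteq> 0})")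
  case False
  let ?As = "{x\<in>A. \<forall>i\<in>S. x i \<noteq> 0}"
  have "\<exists>k\<in>S. card (A - ?As) \<le> card S * card {x\<in>A - ?As. x k = 0}"
    using assms by (intro exists_large_part_of_cover) auto
  then obtain k where k: "k \<in> S" "card (A - ?As) \<le> card S * card {x\<in>A - ?As. x k = 0}"
    by blast
  have "card {x\<in>A - ?As. x k = 0} \<le> card {x\<in>A. x k = 0}"
    using assms(1) by (intro card_mono) auto
  with k(2) have "card (A - ?As) \<le> card S * card {x\<in>A. x k = 0}"
    by (meson le_trans mult_le_mono2)
  then have "real (card (A - ?As)) \<le> real (card S) * real (card {x\<in>A. x k = 0})"
    by (simp flip: of_nat_mult)
  moreover have "real (card (A - ?As)) = real (card A) - real (card ?As)"
    using assms(1) by (simp add: card_Diff_subset of_nat_diff card_mono)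
  ultimately have "real (card A) \<le> 2 * (real (card S) * real (card {x\<in>A. x k = 0}))"
    using False by linarith
  then show ?thesis
    by (intro that(2)[OF k(1)]) (simp add: mult.assoc)
qed (rule that(1))

(* The logarithmic factor of the paper, shifted so that it is at least 1 also for n = 1. *)
definition log_factor :: "nat \<Rightarrow> real" where
  "log_factor n = 1 + ln (real n)"

lemma log_factor_ge_1: "1 \<le> n \<Longrightarrow> 1 \<le> log_factor n"
  unfolding log_factor_def by simp

lemma log_factor_powr_mono:
  "1 \<le> m \<Longrightarrow> m \<le> n \<Longrightarrow> 0 \<le> E \<Longrightarrow> log_factor m powr E \<le> log_factor n powr E"
  unfolding log_factor_def by (intro powr_mono2) auto

lemma harm_le_log_factor: "1 \<le> n \<Longrightarrow> harm n \<le> log_factor n"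
  using euler_mascheroni_sequence_decreasing[of 1 n] by (simp add: harm_def log_factor_def)

lemma log_factor_le_3_ln: "2 \<le> n \<Longrightarrow> log_factor n \<le> 3 * ln (real n)"
proof -
  assume "2 \<le> n"
  then have "ln 2 \<le> ln (real n)"
    by simp
  with ln2_ge_two_thirds show ?thesis
    unfolding log_factor_def by linarith
qed

lemma mult_powr_mult_mono:
  fixes K K' E E' L X :: real
  assumes "0 \<le> K" "K \<le> K'" "E \<le> E'" "1 \<le> L" "0 \<le> X"
  shows "K * L powr E * X \<le> K' * L powr E' * X"
proof -
  have "K * L powr E \<le> K' * L powr E'"
    using assms by (intro mult_mono powr_mono) auto
  then show ?thesis
    using assms(5) by (rule mult_right_mono)
qed

lemma powr_le_mult_powr:
  fixes y z c a X :: real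
  assumes "0 \<le> y" "0 \<le> z" "0 \<le> c" "0 \<le> a" "y \<le> c * z" "z powr a \<le> X"
  shows "y powr a \<le> c powr a * X"
proof -
  have "y powr a \<le> (c * z) powr a"
    using assms by (intro powr_mono2) auto
  also have "\<dots> = c powr a * z powr a"
    using assms by (simp add: powr_mult)
  also have "\<dots> \<le> c powr a * X"
    using assms(6) by (intro mult_left_mono) auto
  finally show ?thesis .
qed

lemma powr_mult_le_max:
  fixes s t k \<delta> :: real
  assumes "0 < s" "0 < t" "0 < k"
  shows "(t * k) powr (\<delta> / (s + 1)) \<le> max (t powr (\<delta> / s)) (k powr \<delta>)"
proof -
  define \<theta> where "\<theta> = s / (s + 1)"
  have \<theta>: "0 \<le> \<theta>" "\<theta> \<le> 1"
    using assms(1) unfolding \<theta>_def by auto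
  have "(t * k) powr (\<delta> / (s + 1)) = (t powr (\<delta> / s)) powr \<theta> * (k powr \<delta>) powr (1 - \<theta>)"
    using assms by (simp add: \<theta>_def powr_powr powr_mult field_simps)
  also have "\<dots> \<le> (max (t powr (\<delta> / s)) (k powr \<delta>)) powr \<theta> * (max (t powr (\<delta> / s)) (k powr \<delta>)) powr (1 - \<theta>)"
    using \<theta> by (intro mult_mono powr_mono2) auto
  also have "\<dots> = max (t powr (\<delta> / s)) (k powr \<delta>)"
    using assms(2) by (simp flip: powr_add) (simp add: abs_of_nonneg le_max_iff_disj)
  finally show ?thesis .
qed

lemma sum_eq_sum_card_superlevel_sets:
  fixes w :: "'b \<Rightarrow> nat"
  assumes "finite B" "\<And>b. b \<in> B \<Longrightarrow> w b \<le> N"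
  shows "(\<Sum>b\<in>B. w b) = (\<Sum>t=1..N. card {b\<in>B. t \<le> w b})"
proof -
  have "w b = (\<Sum>t=1..N. if t \<le> w b then 1 else 0)" if "b \<in> B" for b
  proof -
    have "{t\<in>{1..N}. t \<le> w b} = {1..w b}"
      using assms(2)[OF that] by auto
    then show ?thesis
      by (simp flip: sum.inter_filter)
  qed
  then have "(\<Sum>b\<in>B. w b) = (\<Sum>b\<in>B. \<Sum>t=1..N. if t \<le> w b then 1 else 0)"
    by (rule sum.cong[OF refl])
  also have "\<dots> = (\<Sum>t=1..N. \<Sum>b\<in>B. if t \<le> w b then 1 else 0)"
    by (rule sum.swap)
  also have "\<dots> = (\<Sum>t=1..N. card {b\<in>B. t \<le> w b})"
    using assms(1) by (simp flip: sum.inter_filter)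
  finally show ?thesis .
qed

lemma exists_popular_level:
  fixes w :: "'b \<Rightarrow> nat"
  assumes "finite B" and N: "N = (\<Sum>b\<in>B. w b)" "1 \<le> N"
  shows "\<exists>t\<ge>1. real N \<le> log_factor N * (real t * real (card {b\<in>B. t \<le> w b}))"
proof (rule ccontr)
  assume none: "\<not> ?thesis"
  have less: "real (card {b\<in>B. t \<le> w b}) < real N / log_factor N * (1 / real t)"
    if "t \<in> {1..N}" for t
  proof -
    have "log_factor N * (real t * real (card {b\<in>B. t \<le> w b})) < real N"
      using none that by auto
    then show ?thesis
      using that log_factor_ge_1[OF N(2)] by (simp add: field_simps)
  qed
  have "w b \<le> N" if "b \<in> B" for b
    unfolding N(1) using assms(1) that by (rule member_le_sum[rotated 2]) simp
  then have "N = (\<Sum>t=1..N. card {b\<in>B. t \<le> w b})"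
    using sum_eq_sum_card_superlevel_sets[OF assms(1)] N(1) by simp
  then have "real N = (\<Sum>t=1..N. real (card {b\<in>B. t \<le> w b}))"
    by (simp flip: of_nat_sum)
  also have "\<dots> < (\<Sum>t=1..N. real N / log_factor N * (1 / real t))"
    using less N(2) by (intro sum_strict_mono) auto
  also have "\<dots> = real N / log_factor N * harm N"
    by (simp add: harm_def sum_distrib_left inverse_eq_divide)
  also have "\<dots> \<le> real N / log_factor N * log_factor N"
    using harm_le_log_factor[OF N(2)] log_factor_ge_1[OF N(2)] by (intro mult_left_mono) auto
  also have "\<dots> = real N"
    using log_factor_ge_1[OF N(2)] by simp
  finally show False
    by simp
qed

lemma mult_log_factor_powr_mono:
  assumes "0 \<le> K" "0 \<le> E" "1 \<le> m" "m \<le> n" "0 \<le> X" "X \<le> Y"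
  shows "K * log_factor m powr E * X \<le> K * log_factor n powr E * Y"
proof -
  have "K * log_factor m powr E \<le> K * log_factor n powr E"
    using log_factor_powr_mono[OF assms(3,4,2)] assms(1) by (rule mult_left_mono)
  then show ?thesis
    by (rule mult_mono) (use assms in auto)
qed

lemma exists_uniform_fibres_subset:
  assumes "finite A" "A \<noteq> {}"
  obtains t A' where "1 \<le> t" "A' \<subseteq> A" "A' \<noteq> {}"
    "\<And>b. b \<in> f ` A' \<Longrightarrow> t \<le> card {x\<in>A'. f x = b}"
    "real (card A) \<le> log_factor (card A) * (real t * real (card (f ` A')))"
proof -
  let ?w = "\<lambda>b. card {x\<in>A. f x = b}"
  have "\<exists>t\<ge>1. real (card A) \<le> log_factor (card A) * (real t * real (card {b \<in> f ` A. t \<le> ?w b}))"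
    by (rule exists_popular_level[OF finite_imageI[OF assms(1)] card_eq_sum_card_fibres[OF assms(1)]
          card_ge_1[OF assms]])
  then obtain t where t: "1 \<le> t"
    and popular: "real (card A) \<le> log_factor (card A) * (real t * real (card {b \<in> f ` A. t \<le> ?w b}))"
    by blast
  define A' where "A' = {x\<in>A. t \<le> ?w (f x)}"
  have "f ` A' = {b \<in> f ` A. t \<le> ?w b}"
    unfolding A'_def by auto
  with popular have popular': "real (card A) \<le> log_factor (card A) * (real t * real (card (f ` A')))"
    by simp
  have fibres: "t \<le> card {x\<in>A'. f x = b}" if "b \<in> f ` A'" for b
  proof -
    have "{x\<in>A'. f x = b} = {x\<in>A. f x = b}"
      using that unfolding A'_def by auto
    then show ?thesis
      using that unfolding A'_def by auto
  qed
  have "A' \<noteq> {}"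
  proof
    assume "A' = {}"
    then show False
      using popular' card_ge_1[OF assms] by simp
  qed
  show ?thesis
    by (rule that[OF t _ \<open>A' \<noteq> {}\<close> fibres popular']) (auto simp: A'_def)
qed

definition sp_bound_real :: "real \<Rightarrow> real \<Rightarrow> real \<Rightarrow> bool" where
  "sp_bound_real \<delta> K E \<longleftrightarrow> (\<forall>B::real set. finite B \<longrightarrow> B \<noteq> {} \<longrightarrow>
     real (card B) powr (1 + \<delta>) \<le> K * log_factor (card B) powr E * sp_size B)"

definition sp_bound_flat :: "real \<Rightarrow> nat \<Rightarrow> real \<Rightarrow> real \<Rightarrow> bool" where
  "sp_bound_flat \<delta> r K E \<longleftrightarrow> (\<forall>(S::nat set) (A::(nat \<Rightarrow> real) set).
     finite S \<longrightarrow> card S = r \<longrightarrow> finite A \<longrightarrow> A \<noteq> {} \<longrightarrow> axis_flat S A \<longrightarrow>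
       real (card A) powr (1 + \<delta> / real r) \<le> K * log_factor (card A) powr E * sp_size A)"

lemma sp_bound_realD:
  fixes B :: "real set"
  shows "sp_bound_real \<delta> K E \<Longrightarrow> finite B \<Longrightarrow> B \<noteq> {} \<Longrightarrow>
    real (card B) powr (1 + \<delta>) \<le> K * log_factor (card B) powr E * sp_size B"
  by (simp add: sp_bound_real_def)

lemma sp_bound_flatD:
  fixes S :: "nat set" and A :: "(nat \<Rightarrow> real) set"
  shows "sp_bound_flat \<delta> r K E \<Longrightarrow> finite S \<Longrightarrow> card S = r \<Longrightarrow> finite A \<Longrightarrow> A \<noteq> {} \<Longrightarrow>
    axis_flat S A \<Longrightarrow> real (card A) powr (1 + \<delta> / real r) \<le> K * log_factor (card A) powr E * sp_size A"
  by (simp add: sp_bound_flat_def)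

lemma sp_bound_real_mono:
  assumes "sp_bound_real \<delta> K E" "0 \<le> K" "K \<le> K'" "E \<le> E'"
  shows "sp_bound_real \<delta> K' E'"
  unfolding sp_bound_real_def
proof (intro allI impI)
  fix B :: "real set" assume B: "finite B" "B \<noteq> {}"
  have "real (card B) powr (1 + \<delta>) \<le> K * log_factor (card B) powr E * sp_size B"
    using assms(1) B by (rule sp_bound_realD)
  also have "\<dots> \<le> K' * log_factor (card B) powr E' * sp_size B"
    using assms(2-4) log_factor_ge_1[OF card_ge_1[OF B]]
    by (intro mult_powr_mult_mono sp_size_nonneg)
  finally show "real (card B) powr (1 + \<delta>) \<le> K' * log_factor (card B) powr E' * sp_size B" .
qed

lemma sp_bound_flat_mono:
  assumes "sp_bound_flat \<delta> r K E" "0 \<le> K" "K \<le> K'" "E \<le> E'"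
  shows "sp_bound_flat \<delta> r K' E'"
  unfolding sp_bound_flat_def
proof (intro allI impI)
  fix S :: "nat set" and A :: "(nat \<Rightarrow> real) set"
  assume A: "finite S" "card S = r" "finite A" "A \<noteq> {}" "axis_flat S A"
  have "real (card A) powr (1 + \<delta> / real r) \<le> K * log_factor (card A) powr E * sp_size A"
    using assms(1) A by (rule sp_bound_flatD)
  also have "\<dots> \<le> K' * log_factor (card A) powr E' * sp_size A"
    using assms(2-4) log_factor_ge_1[OF card_ge_1[OF A(3,4)]]
    by (intro mult_powr_mult_mono sp_size_nonneg)
  finally show "real (card A) powr (1 + \<delta> / real r) \<le> K' * log_factor (card A) powr E' * sp_size A" .
qed

lemma sp_bound_flat_one:
  assumes "sp_bound_real \<delta> K E" "0 \<le> K"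
  shows "sp_bound_flat \<delta> 1 K E"
  unfolding sp_bound_flat_def
proof (intro allI impI)
  fix S :: "nat set" and A :: "(nat \<Rightarrow> real) set"
  assume A: "finite S" "card S = 1" "finite A" "A \<noteq> {}" "axis_flat S A"
  then obtain j where "S = {j}"
    by (meson card_1_singletonE)
  with A(5) have inj: "inj_on (\<lambda>x. x j) A"
    by (simp add: axis_flat_singleton_inj_on)
  let ?B = "(\<lambda>x. x j) ` A"
  have "real 1 * sp_size ?B \<le> sp_size A"
  proof (rule mult_sp_size_projection_le[OF A(3)])
    show "1 \<le> card {x\<in>A. x j = b}" if "b \<in> ?B" for b
      using A(3) that by (rule card_fibre_ge_1)
    show "inj_on ((*) x) {z\<in>A. z j = b}" for x b
      using inj by (auto simp: inj_on_def)
  qed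
  moreover have "card ?B = card A"
    using inj by (rule card_image)
  moreover have "real (card ?B) powr (1 + \<delta>) \<le> K * log_factor (card ?B) powr E * sp_size ?B"
    using assms(1) A(3,4) by (intro sp_bound_realD) auto
  ultimately have "real (card A) powr (1 + \<delta>) \<le> K * log_factor (card A) powr E * sp_size A"
    using assms(2) by (simp add: order_trans mult_left_mono)
  then show "real (card A) powr (1 + \<delta> / real 1) \<le> K * log_factor (card A) powr E * sp_size A"
    by simp
qed

lemma sp_size_lower_bound_projection:
  fixes A :: "(nat \<Rightarrow> real) set"
  assumes bound: "sp_bound_real \<delta> K E" and "0 \<le> K" "0 \<le> E"
    and A: "finite A" "A \<noteq> {}" "axis_flat S A" "\<forall>x\<in>A. \<forall>i\<in>S. x i \<noteq> 0"
    and fibres: "\<And>b. b \<in> (\<lambda>x. x j) ` A \<Longrightarrow> t \<le> card {x\<in>A. x j = b}"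
  shows "real t * real (card ((\<lambda>x. x j) ` A)) powr (1 + \<delta>) \<le> K * log_factor (card A) powr E * sp_size A"
proof -
  let ?B = "(\<lambda>x. x j) ` A"
  let ?KL = "K * log_factor (card A) powr E"
  have "real (card ?B) powr (1 + \<delta>) \<le> K * log_factor (card ?B) powr E * sp_size ?B"
    using bound A(1,2) by (intro sp_bound_realD) auto
  also have "\<dots> \<le> ?KL * sp_size ?B"
    using A(1,2) assms(2,3) card_image_le[OF A(1)]
    by (intro mult_log_factor_powr_mono card_ge_1 sp_size_nonneg) auto
  finally have "real t * real (card ?B) powr (1 + \<delta>) \<le> ?KL * (real t * sp_size ?B)"
    by (simp add: mult_left_mono mult.left_commute)
  also have "\<dots> \<le> ?KL * sp_size A"
  proof (intro mult_left_mono mult_sp_size_projection_le)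
    show "inj_on ((*) x) {z\<in>A. z j = b}" if "x \<in> A" for x b
      by (rule inj_on_subset[OF inj_on_times_axis_flat[OF A(3)]]) (use A(4) that in auto)
  qed (use A(1) fibres assms(2) in auto)
  finally show ?thesis .
qed

lemma sp_size_lower_bound_fibres:
  fixes A :: "(nat \<Rightarrow> real) set"
  assumes bound: "sp_bound_flat \<delta> (r - 1) K E" and "0 \<le> K" "0 \<le> E" "0 \<le> \<delta>"
    and A: "finite A" "axis_flat S A" "finite S" "card S = r" "j \<in> S"
    and fibres: "\<And>b. b \<in> (\<lambda>x. x j) ` A \<Longrightarrow> t \<le> card {x\<in>A. x j = b}"
  shows "real (card A) * real t powr (\<delta> / real (r - 1)) \<le> 2 * K * log_factor (card A) powr E * sp_size A"
proof -
  let ?fibre = "\<lambda>b. {x\<in>A. x j = b}"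
  let ?KL = "K * log_factor (card A) powr E"
  have fibre_bound: "real (card (?fibre b)) * real t powr (\<delta> / real (r - 1)) \<le> ?KL * sp_size (?fibre b)"
    if b: "b \<in> (\<lambda>x. x j) ` A" for b
  proof -
    let ?m = "card (?fibre b)"
    have m: "1 \<le> ?m" "?m \<le> card A"
      using card_fibre_ge_1[OF A(1) b] A(1) by (auto intro: card_mono)
    have "real ?m * real t powr (\<delta> / real (r - 1)) \<le> real ?m * real ?m powr (\<delta> / real (r - 1))"
      using fibres[OF b] assms(4) by (intro mult_left_mono powr_mono2) auto
    also have "\<dots> = real ?m powr (1 + \<delta> / real (r - 1))"
      using m(1) by (simp add: powr_add)
    also have "\<dots> \<le> K * log_factor ?m powr E * sp_size (?fibre b)"
      using A b by (intro sp_bound_flatD[OF bound _ _ _ _ axis_flat_slice[OF A(2)]]) auto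
    also have "\<dots> \<le> ?KL * sp_size (?fibre b)"
      using m assms(2,3) by (intro mult_log_factor_powr_mono sp_size_nonneg) auto
    finally show ?thesis .
  qed
  have "real (card A) * real t powr (\<delta> / real (r - 1))
      = (\<Sum>b\<in>(\<lambda>x. x j) ` A. real (card (?fibre b)) * real t powr (\<delta> / real (r - 1)))"
    using card_eq_sum_card_fibres[OF A(1), of "\<lambda>x. x j"] by (simp add: sum_distrib_right)
  also have "\<dots> \<le> (\<Sum>b\<in>(\<lambda>x. x j) ` A. ?KL * sp_size (?fibre b))"
    by (intro sum_mono fibre_bound)
  also have "\<dots> \<le> ?KL * (2 * sp_size A)"
    using sum_sp_size_fibres_le[OF A(1), of "(\<lambda>x. x j) ` A" j] A(1) assms(2)
    by (simp add: mult_left_mono flip: sum_distrib_left)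
  finally show ?thesis
    by (simp add: mult_ac)
qed

lemma sp_size_lower_bound_uniform_fibres:
  fixes A :: "(nat \<Rightarrow> real) set"
  assumes bounds: "sp_bound_real \<delta> K E" "sp_bound_flat \<delta> (r - 1) K E"
    and "0 \<le> K" "0 \<le> E" "0 \<le> \<delta>" "2 \<le> r"
    and A: "finite A" "A \<noteq> {}" "axis_flat S A" "finite S" "card S = r" "j \<in> S"
      "\<forall>x\<in>A. \<forall>i\<in>S. x i \<noteq> 0"
    and t: "1 \<le> t" and fibres: "\<And>b. b \<in> (\<lambda>x. x j) ` A \<Longrightarrow> t \<le> card {x\<in>A. x j = b}"
  shows "(real t * real (card ((\<lambda>x. x j) ` A))) powr (1 + \<delta> / real r)
    \<le> 2 * K * log_factor (card A) powr E * sp_size A"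
proof -
  let ?k = "card ((\<lambda>x. x j) ` A)"
  let ?X = "2 * K * log_factor (card A) powr E * sp_size A"
  have k: "1 \<le> ?k"
    using A(1,2) by (intro card_ge_1) auto
  have "real t * real ?k * real t powr (\<delta> / real (r - 1)) \<le> real (card A) * real t powr (\<delta> / real (r - 1))"
    using mult_card_image_le_card[OF A(1) fibres] by (intro mult_right_mono) (simp_all flip: of_nat_mult)
  also have "\<dots> \<le> ?X"
    by (rule sp_size_lower_bound_fibres[OF bounds(2) assms(3-5) A(1,3-6) fibres])
  finally have fibre_part: "real t * real ?k * real t powr (\<delta> / real (r - 1)) \<le> ?X" .
  have "real t * real ?k * real ?k powr \<delta> = real t * real ?k powr (1 + \<delta>)"
    using k by (simp add: powr_add)
  also have "\<dots> \<le> K * log_factor (card A) powr E * sp_size A"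
    by (rule sp_size_lower_bound_projection[OF bounds(1) assms(3,4) A(1-3,7) fibres])
  also have "\<dots> \<le> ?X"
    using assms(3) sp_size_nonneg[of A] by (simp add: mult_right_mono)
  finally have projection_part: "real t * real ?k * real ?k powr \<delta> \<le> ?X" .
  have r: "real (r - 1) + 1 = real r" "0 < real (r - 1)"
    using assms(6) by auto
  have "(real t * real ?k) powr (1 + \<delta> / real r) = real t * real ?k * (real t * real ?k) powr (\<delta> / real r)"
    using t k by (simp add: powr_add)
  also have "\<dots> \<le> real t * real ?k * max (real t powr (\<delta> / real (r - 1))) (real ?k powr \<delta>)"
  proof (intro mult_left_mono)
    have "(real t * real ?k) powr (\<delta> / (real (r - 1) + 1))
        \<le> max (real t powr (\<delta> / real (r - 1))) (real ?k powr \<delta>)"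
      using r(2) t k by (intro powr_mult_le_max) auto
    then show "(real t * real ?k) powr (\<delta> / real r) \<le> max (real t powr (\<delta> / real (r - 1))) (real ?k powr \<delta>)"
      by (simp only: r(1))
  qed simp
  also have "\<dots> \<le> ?X"
    using fibre_part projection_part by (simp add: max_def)
  finally show ?thesis .
qed

lemma sp_size_lower_bound_nonzero_coordinates:
  fixes A :: "(nat \<Rightarrow> real) set"
  assumes bounds: "sp_bound_real \<delta> K E" "sp_bound_flat \<delta> (r - 1) K E"
    and "0 \<le> K" "0 \<le> E" "0 \<le> \<delta>" "2 \<le> r"
    and A: "finite A" "A \<noteq> {}" "axis_flat S A" "finite S" "card S = r" "\<forall>x\<in>A. \<forall>i\<in>S. x i \<noteq> 0"
  shows "real (card A) powr (1 + \<delta> / real r)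
    \<le> 2 * K * log_factor (card A) powr (E + (1 + \<delta> / real r)) * sp_size A"
proof -
  have "S \<noteq> {}"
    using A(5) assms(6) by auto
  then obtain j where j: "j \<in> S"
    by blast
  obtain t A' where t: "1 \<le> t" and A': "A' \<subseteq> A" "A' \<noteq> {}"
    and fibres: "\<And>b. b \<in> (\<lambda>x. x j) ` A' \<Longrightarrow> t \<le> card {x\<in>A'. x j = b}"
    and popular: "real (card A) \<le> log_factor (card A) * (real t * real (card ((\<lambda>x. x j) ` A')))"
    using exists_uniform_fibres_subset[OF A(1,2)] by blast
  have "finite A'"
    using A'(1) A(1) by (rule finite_subset)
  have "(real t * real (card ((\<lambda>x. x j) ` A'))) powr (1 + \<delta> / real r)
      \<le> 2 * K * log_factor (card A') powr E * sp_size A'"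
  proof (rule sp_size_lower_bound_uniform_fibres[OF bounds assms(3-6) \<open>finite A'\<close> A'(2) _ A(4,5) j _ t fibres])
    show "axis_flat S A'"
      using A(3) A'(1) by (rule axis_flat_subset)
    show "\<forall>x\<in>A'. \<forall>i\<in>S. x i \<noteq> 0"
      using A(6) A'(1) by blast
  qed
  also have "\<dots> \<le> 2 * K * log_factor (card A) powr E * sp_size A"
    using A'(1) A(1) assms(3,4) card_ge_1[OF \<open>finite A'\<close> A'(2)]
    by (intro mult_log_factor_powr_mono card_mono sp_size_mono sp_size_nonneg) auto
  finally have "real (card A) powr (1 + \<delta> / real r)
      \<le> log_factor (card A) powr (1 + \<delta> / real r) * (2 * K * log_factor (card A) powr E * sp_size A)"
    using popular log_factor_ge_1[OF card_ge_1[OF A(1,2)]] assms(5) assms(6)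
    by (intro powr_le_mult_powr) auto
  then show ?thesis
    by (simp add: powr_add mult_ac)
qed

lemma sp_size_lower_bound_zero_coordinate:
  fixes A :: "(nat \<Rightarrow> real) set"
  assumes bound: "sp_bound_flat \<delta> (r - 1) K E"
    and "0 \<le> K" "0 \<le> E" "0 \<le> \<delta>" "2 \<le> r" "0 \<le> c"
    and A: "finite A" "A \<noteq> {}" "axis_flat S A" "finite S" "card S = r" "k \<in> S"
    and large: "real (card A) \<le> c * real (card {x\<in>A. x k = 0})"
  shows "real (card A) powr (1 + \<delta> / real r) \<le> c powr (1 + \<delta> / real r) * (K * log_factor (card A) powr E * sp_size A)"
proof -
  let ?A0 = "{x\<in>A. x k = 0}"
  have "?A0 \<noteq> {}"
  proof
    assume "?A0 = {}"
    then show False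
      using large card_ge_1[OF A(1,2)] unfolding \<open>?A0 = {}\<close> by simp
  qed
  have m: "1 \<le> card ?A0" "card ?A0 \<le> card A"
    using card_ge_1[OF _ \<open>?A0 \<noteq> {}\<close>] A(1) by (auto intro: card_mono)
  have "real (card ?A0) powr (1 + \<delta> / real r) \<le> real (card ?A0) powr (1 + \<delta> / real (r - 1))"
    using m(1) assms(4,5) by (intro powr_mono add_left_mono divide_left_mono) auto
  also have "\<dots> \<le> K * log_factor (card ?A0) powr E * sp_size ?A0"
    using A \<open>?A0 \<noteq> {}\<close> by (intro sp_bound_flatD[OF bound _ _ _ _ axis_flat_slice[OF A(3)]]) auto
  also have "\<dots> \<le> K * log_factor (card A) powr E * sp_size A"
    using A(1) m assms(2,3) by (intro mult_log_factor_powr_mono sp_size_mono sp_size_nonneg) auto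
  finally show ?thesis
    using large assms(4,6) by (intro powr_le_mult_powr) auto
qed

(* The factor (2 r)^(1 + delta/r) pays for passing to a subset of density 1/(2 r), the extra
   exponent 1 + delta/r of the logarithm for the pigeonhole loss. *)
lemma sp_bound_flat_step:
  assumes bounds: "sp_bound_real \<delta> K E" "sp_bound_flat \<delta> (r - 1) K E"
    and "0 \<le> K" "0 \<le> E" "0 \<le> \<delta>" "2 \<le> r"
  shows "sp_bound_flat \<delta> r (2 * (2 * real r) powr (1 + \<delta> / real r) * K) (E + (1 + \<delta> / real r))"
  unfolding sp_bound_flat_def
proof (intro allI impI)
  fix S :: "nat set" and A :: "(nat \<Rightarrow> real) set"
  assume A: "finite S" "card S = r" "finite A" "A \<noteq> {}" "axis_flat S A"
  define a where "a = 1 + \<delta> / real r"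
  define L where "L = log_factor (card A)"
  have a: "0 \<le> a" and L: "1 \<le> L" and "S \<noteq> {}"
    using assms(5,6) log_factor_ge_1[OF card_ge_1[OF A(3,4)]] A(2)
    unfolding a_def L_def by auto
  from large_nonzero_part_or_large_zero_slice[OF A(3) A(1) \<open>S \<noteq> {}\<close>]
  show "real (card A) powr (1 + \<delta> / real r)
    \<le> 2 * (2 * real r) powr (1 + \<delta> / real r) * K * log_factor (card A) powr (E + (1 + \<delta> / real r)) * sp_size A"
  proof cases
    case 1
    let ?As = "{x\<in>A. \<forall>i\<in>S. x i \<noteq> 0}"
    have "?As \<noteq> {}"
    proof
      assume "?As = {}"
      then show False
        using 1 card_ge_1[OF A(3,4)] unfolding \<open>?As = {}\<close> by simp
    qed
    then have As: "?As \<subseteq> A" "finite ?As" "?As \<noteq> {}"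
      using A(3) by auto
    have "real (card ?As) powr a \<le> 2 * K * log_factor (card ?As) powr (E + a) * sp_size ?As"
      using bounds assms(3-6) As(2,3) axis_flat_subset[OF A(5) As(1)] A(1,2)
      unfolding a_def by (intro sp_size_lower_bound_nonzero_coordinates) auto
    also have "\<dots> \<le> 2 * K * L powr (E + a) * sp_size A"
      using As A(3) card_ge_1[OF As(2,3)] a assms(3,4) unfolding L_def
      by (intro mult_log_factor_powr_mono card_mono sp_size_mono sp_size_nonneg) auto
    finally have "real (card A) powr a \<le> 2 powr a * (2 * K * L powr (E + a) * sp_size A)"
      using 1 a by (intro powr_le_mult_powr) auto
    also have "\<dots> \<le> (2 * real r) powr a * (2 * K * L powr (E + a) * sp_size A)"
      using a assms(3,6) L sp_size_nonneg[of A] by (intro mult_right_mono powr_mono2) auto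
    finally show ?thesis
      unfolding a_def L_def by (simp add: mult_ac)
  next
    case (2 k)
    have "real (card A) powr a \<le> (2 * real r) powr a * (K * L powr E * sp_size A)"
      using bounds(2) assms(3-6) A 2 unfolding a_def L_def
      by (intro sp_size_lower_bound_zero_coordinate) auto
    also have "\<dots> \<le> (2 * real r) powr a * (2 * K * L powr (E + a) * sp_size A)"
      using a assms(3) L by (intro mult_left_mono mult_powr_mult_mono sp_size_nonneg) auto
    finally show ?thesis
      unfolding a_def L_def by (simp add: mult_ac)
  qed
qed

lemma sp_bound_flat_exists:
  assumes "0 \<le> \<delta>" and bound: "sp_bound_real \<delta> K0 E0" and "0 < K0" "0 \<le> E0" "1 \<le> r"
  shows "\<exists>K>0. \<exists>E\<ge>0. sp_bound_flat \<delta> r K E"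
  using assms(5)
proof (induction r rule: nat_induct_at_least)
  case base
  then show ?case
    using sp_bound_flat_one[OF bound] assms(3,4) by auto
next
  case (Suc r)
  then obtain K1 E1 where "0 < K1" "0 \<le> E1" and IH: "sp_bound_flat \<delta> r K1 E1"
    by blast
  define K where "K = max K0 K1"
  define E where "E = max E0 E1"
  have "sp_bound_real \<delta> K E"
    using sp_bound_real_mono[OF bound] assms(3) unfolding K_def E_def by simp
  moreover have "sp_bound_flat \<delta> (Suc r - 1) K E"
    using sp_bound_flat_mono[OF IH] \<open>0 < K1\<close> unfolding K_def E_def by simp
  ultimately have "sp_bound_flat \<delta> (Suc r)
      (2 * (2 * real (Suc r)) powr (1 + \<delta> / real (Suc r)) * K) (E + (1 + \<delta> / real (Suc r)))"
    using Suc.hyps assms(1,3,4) unfolding K_def E_def by (intro sp_bound_flat_step) auto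
  moreover have "0 < 2 * (2 * real (Suc r)) powr (1 + \<delta> / real (Suc r)) * K"
    using assms(3) unfolding K_def by simp
  moreover have "0 \<le> E + (1 + \<delta> / real (Suc r))"
    using assms(1,4) unfolding E_def by simp
  ultimately show ?case
    by blast
qed

lemma sumset_real_eq: "sumset_real B = B + B"
  unfolding sumset_real_def set_plus_def by blast

lemma prodset_real_eq: "prodset_real B = B * B"
  unfolding prodset_real_def set_times_def by blast

lemma sumset_vec_eq: "sumset_vec A = A + A"
  unfolding sumset_vec_def set_plus_def plus_fun_def by blast

lemma prodset_vec_eq: "prodset_vec A = A * A"
  unfolding prodset_vec_def set_times_def times_fun_def by blast

lemma ln_powr_lower_bound:
  assumes "2 \<le> n"
  shows "1 \<le> (3/2) powr max 0 D * log_factor n powr max 0 (- D) * ln (real n) powr D"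
proof -
  have "ln 2 \<le> ln (real n)"
    using assms by simp
  then have "2/3 \<le> ln (real n)"
    using ln2_ge_two_thirds by linarith
  then have ln: "0 < ln (real n)" "1 \<le> 3/2 * ln (real n)" "ln (real n) \<le> log_factor n"
    unfolding log_factor_def by auto
  show ?thesis
  proof (cases "0 \<le> D")
    case True
    have "1 \<le> (3/2 * ln (real n)) powr D"
      using ln(2) True by (rule ge_one_powr_ge_zero)
    moreover have "(3/2 * ln (real n)) powr D = (3/2) powr D * ln (real n) powr D"
      using ln(1) powr_mult[of "3/2" "ln (real n)" D] by simp
    moreover have "log_factor n powr max 0 (- D) = 1"
      using True ln(1,3) by simp
    ultimately show ?thesis
      using True by simp
  next
    case False
    have "1 \<le> (log_factor n / ln (real n)) powr (- D)"
      using ln False by (intro ge_one_powr_ge_zero) (auto simp: field_simps)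
    also have "\<dots> = log_factor n powr (- D) / ln (real n) powr (- D)"
      by (rule powr_divide)
    also have "\<dots> = log_factor n powr (- D) * ln (real n) powr D"
      using powr_minus_divide[of "ln (real n)" "- D"] by simp
    finally show ?thesis
      using False by simp
  qed
qed

lemma sp_bound_real_of_sp_admissible:
  assumes "sp_admissible \<delta>"
  shows "\<exists>K>0. \<exists>E\<ge>0. sp_bound_real \<delta> K E"
proof -
  obtain C D where "0 < C" and admissible: "\<forall>B::real set. finite B \<and> B \<noteq> {} \<longrightarrow>
      C * real (card B) powr (1 + \<delta>) * ln (real (card B)) powr D \<le> sp_size B"
    using assms unfolding sp_admissible_def sumset_real_eq prodset_real_eq sp_size_def[symmetric]
    by blast
  define K where "K = max (1/2) ((3/2) powr max 0 D / C)"
  define E where "E = max 0 (- D)"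
  have "sp_bound_real \<delta> K E"
    unfolding sp_bound_real_def
  proof (intro allI impI)
    fix B :: "real set" assume B: "finite B" "B \<noteq> {}"
    let ?y = "real (card B) powr (1 + \<delta>)"
    show "?y \<le> K * log_factor (card B) powr E * sp_size B"
    proof (cases "card B = 1")
      case True
      (* Here ln (card B) = 0, so the hypothesis says nothing; use sp_size {b} = 2 instead. *)
      then obtain b where "B = {b}"
        by (meson card_1_singletonE)
      moreover have "1/2 \<le> K"
        unfolding K_def by simp
      ultimately show ?thesis
        by (simp add: sp_size_singleton log_factor_def)
    next
      case False
      then have n: "2 \<le> card B"
        using card_ge_1[OF B] by simp
      have "?y \<le> ?y * ((3/2) powr max 0 D * log_factor (card B) powr E * ln (real (card B)) powr D)"
        using ln_powr_lower_bound[OF n, of D] unfolding E_def by (simp add: mult_le_cancel_left1)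
      also have "\<dots> = (3/2) powr max 0 D / C * log_factor (card B) powr E * (C * ?y * ln (real (card B)) powr D)"
        using \<open>0 < C\<close> by simp
      also have "\<dots> \<le> K * log_factor (card B) powr E * sp_size B"
        using admissible B \<open>0 < C\<close> unfolding K_def
        by (intro mult_mono) auto
      finally show ?thesis .
    qed
  qed
  moreover have "0 < K" "0 \<le> E"
    unfolding K_def E_def by auto
  ultimately show ?thesis
    by blast
qed

lemma ln_powr_bound_of_log_factor_bound:
  assumes "1 \<le> n" "0 < K" "0 \<le> E" "0 \<le> X" and bound: "y \<le> K * log_factor n powr E * X"
  shows "1 / (K * 3 powr E) * y * ln (real n) powr (- E) \<le> X"
proof (cases "n = 1")
  case False
  then have "2 \<le> n"
    using assms(1) by simp
  then have ln: "0 < ln (real n)" "log_factor n \<le> 3 * ln (real n)"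
    using log_factor_le_3_ln by auto
  have "y * ln (real n) powr (- E) \<le> K * log_factor n powr E * X * ln (real n) powr (- E)"
    using bound by (rule mult_right_mono) simp
  also have "\<dots> \<le> K * (3 * ln (real n)) powr E * X * ln (real n) powr (- E)"
    using ln assms(2-4) log_factor_ge_1[OF assms(1)]
    by (intro mult_right_mono mult_left_mono powr_mono2) auto
  also have "\<dots> = K * 3 powr E * X * (ln (real n) powr E * ln (real n) powr (- E))"
    using ln(1) by (simp add: powr_mult mult_ac)
  also have "\<dots> = K * 3 powr E * X"
    using ln(1) by (simp flip: powr_add)
  finally show ?thesis
    using assms(2) by (simp add: pos_divide_le_eq mult.commute)
qed (use assms(4) in simp) \<comment> \<open>for n = 1 the left-hand side is 0, as 0 powr - E = 0\<close>

theorem lemma3p1: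
  fixes \<delta>1 :: real and r :: nat
  assumes "\<delta>1 > 0" and "sp_admissible \<delta>1" and "r \<ge> 1"
  shows "\<exists>C>0. \<exists>D::real. \<forall>(d::nat) (S::nat set) (a::nat \<Rightarrow> real) (A::(nat \<Rightarrow> real) set).
           d \<ge> 2 \<longrightarrow> S \<subseteq> {..<d} \<longrightarrow> card S = r \<longrightarrow> r \<le> d - 1 \<longrightarrow>
           A \<subseteq> axis_subspace d S a \<longrightarrow> finite A \<longrightarrow> A \<noteq> {} \<longrightarrow>
           real (card (sumset_vec A)) + real (card (prodset_vec A))
             \<ge> C * real (card A) powr (1 + \<delta>1 / real r) * ln (real (card A)) powr D"
proof -
  obtain K0 E0 where K0: "0 < K0" "0 \<le> E0" and bound0: "sp_bound_real \<delta>1 K0 E0"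
    using sp_bound_real_of_sp_admissible[OF assms(2)] by blast
  obtain K E where "0 < K" "0 \<le> E" and bound: "sp_bound_flat \<delta>1 r K E"
    using sp_bound_flat_exists[OF less_imp_le[OF assms(1)] bound0 K0 assms(3)] by blast
  show ?thesis
  proof (rule exI[of _ "1 / (K * 3 powr E)"], intro conjI exI[of _ "- E"] allI impI)
    fix d S a and A :: "(nat \<Rightarrow> real) set"
    assume "2 \<le> d" and S: "S \<subseteq> {..<d}" "card S = r" and "r \<le> d - 1"
      and A: "A \<subseteq> axis_subspace d S a" "finite A" "A \<noteq> {}"
    have "finite S"
      using S(1) by (rule finite_subset) simp
    then have "real (card A) powr (1 + \<delta>1 / real r) \<le> K * log_factor (card A) powr E * sp_size A"
      using S(2) A(2,3) axis_flat_axis_subspace[OF A(1)] by (rule sp_bound_flatD[OF bound])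
    then show "1 / (K * 3 powr E) * real (card A) powr (1 + \<delta>1 / real r) * ln (real (card A)) powr (- E)
        \<le> real (card (sumset_vec A)) + real (card (prodset_vec A))"
      unfolding sumset_vec_eq prodset_vec_eq sp_size_def[symmetric]
      by (rule ln_powr_bound_of_log_factor_bound[OF card_ge_1[OF A(2,3)] \<open>0 < K\<close> \<open>0 \<le> E\<close> sp_size_nonneg])
  qed (use \<open>0 < K\<close> in simp)
qed

end
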